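(* Let $\lambda,\mu$ be partitions with $\mathrm{core}(\lambda)=\mathrm{core}(\mu)$, and write $\mathrm{quot}(\lambda)=(\lambda^0,\dots,\lambda^{\ell-1})$, $\mathrm{quot}(\mu)=(\mu^0,\dots,\mu^{\ell-1})$. If $|\lambda^i|=|\mu^i|$ and $\lambda^i\ge\mu^i$ in dominance order for every $i$, then $\lambda\ge\mu$ in dominance order.
   Context: Fix $\ell\ge1$. Nodes of a partition $\lambda$ are $(a,b)$ with $1\le a\le\lambda_b$; content $b-a$. Let $n_j(\lambda)$ be the number of nodes of content $j$. Maya diagram $m(\lambda):\mathbb{Z}\to\{\pm1\}$: for $j\ge0$, $m(\lambda)(j)=-1$ if $n_{j+1}-n_j=-1$, else $1$; for $j<0$, $m(\lambda)(j)=1$ if $n_{j+1}-n_j=1$, else $-1$. Charge of $m$: $\#\{j<0:m(j)=-1\}-\#\{j\ge0:m(j)=1\}$; charge-zero Maya diagrams correspond bijectively to partitions. For $0\le i\le\ell-1$, $m_i(j)=m(\lambda)(i+j\ell)$ has charge $c_i$, and its unique charge-zero translate is the Maya diagram of a partition $\lambda^i$. $\mathrm{quot}(\lambda)=(\lambda^0,\dots,\lambda^{\ell-1})$ (the $\ell$-quotient) and $\mathrm{core}(\lambda)=(c_0,\dots,c_{\ell-1})$ (encoding the $\ell$-core). *)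

theory Defs
  imports Main
begin

definition is_partition :: "nat list \<Rightarrow> bool" where
  "is_partition xs \<longleftrightarrow> sorted (rev xs) \<and> (\<forall>x\<in>set xs. 0 < x)"

definition part_entry :: "nat list \<Rightarrow> nat \<Rightarrow> nat" where
  "part_entry xs b = (if 1 \<le> b \<and> b \<le> length xs then xs ! (b - 1) else 0)"

definition nodes :: "nat list \<Rightarrow> (nat \<times> nat) set" where
  "nodes xs = {(a, b). 1 \<le> b \<and> 1 \<le> a \<and> a \<le> part_entry xs b}"

definition ncont :: "nat list \<Rightarrow> int \<Rightarrow> int" where
  "ncont xs j = int (card {(a, b). (a, b) \<in> nodes xs \<and> int b - int a = j})"

definition maya :: "nat list \<Rightarrow> int \<Rightarrow> int" where
  "maya xs j =
     (if 0 \<le> j then (if ncont xs (j + 1) - ncont xs j = -1 then -1 else 1)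
      else (if ncont xs (j + 1) - ncont xs j = 1 then 1 else -1))"

definition charge :: "(int \<Rightarrow> int) \<Rightarrow> int" where
  "charge m = int (card {j. j < 0 \<and> m j = 1}) - int (card {j. 0 \<le> j \<and> m j = -1})"

definition maya_comp :: "nat \<Rightarrow> nat list \<Rightarrow> nat \<Rightarrow> int \<Rightarrow> int" where
  "maya_comp l xs i = (\<lambda>j. maya xs (int i + j * int l))"

definition core :: "nat \<Rightarrow> nat list \<Rightarrow> int list" where
  "core l xs = map (\<lambda>i. charge (maya_comp l xs i)) [0..<l]"

definition quot_comp :: "nat \<Rightarrow> nat list \<Rightarrow> nat \<Rightarrow> nat list" where
  "quot_comp l xs i =
     (THE ys. is_partition ys \<and>
        (\<exists>k. charge (\<lambda>j. maya_comp l xs i (j + k)) = 0 \<and>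
             maya ys = (\<lambda>j. maya_comp l xs i (j + k))))"

definition quot :: "nat \<Rightarrow> nat list \<Rightarrow> nat list list" where
  "quot l xs = map (quot_comp l xs) [0..<l]"

definition dominates :: "nat list \<Rightarrow> nat list \<Rightarrow> bool" where
  "dominates xs ys \<longleftrightarrow> sum_list xs = sum_list ys \<and>
     (\<forall>k. sum_list (take k ys) \<le> sum_list (take k xs))"

end

theory Submission
  imports Defs
begin

text \<open>Place the rows of a partition \<open>\<lambda>\<close> on the Maya diagram at the positions
  \<open>h\<^sub>b = b - \<lambda>\<^sub>b - 1\<close> and measure \<open>\<lambda>\<close> by its excess \<open>s \<mapsto> \<Sum>\<^sub>b max 0 (s - h\<^sub>b)\<close>. Then \<open>\<lambda> \<ge> \<mu>\<close> in
  dominance order iff \<open>excess \<mu> \<le> excess \<lambda>\<close> everywhere, with equality for large \<open>s\<close>. Sorting the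
  positions by their residue mod \<open>l\<close> (the runners of the \<open>l\<close>-abacus) writes \<open>excess \<lambda> s\<close> as a
  combination, with nonnegative weights depending only on \<open>s\<close> and \<open>l\<close>, of the excesses of the
  quotient partitions \<open>\<lambda>\<^sup>i\<close> shifted by the charges \<open>c\<^sub>i\<close>. Equal cores give equal shifts, so the
  comparisons for the quotients add up to the comparison for \<open>\<lambda>\<close> and \<open>\<mu>\<close>.\<close>

lemma part_entry_beyond: "length xs < b \<Longrightarrow> part_entry xs b = 0"
  by (simp add: part_entry_def)

lemma part_entry_0 [simp]: "part_entry xs 0 = 0"
  by (simp add: part_entry_def)

lemma part_entry_antimono:
  assumes "is_partition xs" "1 \<le> b" "b \<le> b'"
  shows "part_entry xs b' \<le> part_entry xs b"
proof (cases "b' \<le> length xs")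
  case True
  have "sorted (rev xs)" using assms(1) by (simp add: is_partition_def)
  then have "xs ! (b' - 1) \<le> xs ! (b - 1)"
    using sorted_rev_nth_mono[of xs "b - 1" "b' - 1"] True assms by auto
  then show ?thesis using True assms by (simp add: part_entry_def)
qed (simp add: part_entry_def)

lemma part_entry_pos: "is_partition xs \<Longrightarrow> 1 \<le> b \<Longrightarrow> b \<le> length xs \<Longrightarrow> 0 < part_entry xs b"
  by (auto simp: part_entry_def is_partition_def)

lemma part_entry_le_sum_list: "part_entry xs b \<le> sum_list xs"
  by (auto simp: part_entry_def intro!: elem_le_sum_list)

lemma sum_list_take_eq_sum_part_entry: "sum_list (take k xs) = (\<Sum>b = 1..k. part_entry xs b)"
proof (induction k)
  case (Suc k)
  show ?case
  proof (cases "k < length xs")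
    case True
    then have "sum_list (take (Suc k) xs) = sum_list (take k xs) + part_entry xs (Suc k)"
      by (simp add: take_Suc_conv_app_nth part_entry_def)
    then show ?thesis using Suc by simp
  qed (use Suc in \<open>simp add: part_entry_def\<close>)
qed simp

lemma partition_eqI:
  assumes "is_partition xs" "is_partition ys" and same: "\<And>b. part_entry xs b = part_entry ys b"
  shows "xs = ys"
proof -
  have len: "length xs = length ys"
  proof (rule ccontr)
    assume "length xs \<noteq> length ys"
    then consider "length xs < length ys" | "length ys < length xs" by linarith
    then show False
    proof cases
      case 1
      then show False
        using part_entry_pos[OF assms(2), of "length ys"] part_entry_beyond[of xs] same by simp
    next
      case 2
      then show False
        using part_entry_pos[OF assms(1), of "length xs"] part_entry_beyond[of ys] same by simp
    qed
  qed
  show ?thesis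
  proof (rule nth_equalityI[OF len])
    fix i assume "i < length xs"
    then show "xs ! i = ys ! i" using same[of "Suc i"] len by (simp add: part_entry_def)
  qed
qed

lemma partition_eq_if_sum_list_take_eq:
  assumes "is_partition xs" "is_partition ys"
    and "\<And>k. sum_list (take k xs) = sum_list (take k ys)"
  shows "xs = ys"
proof (rule partition_eqI[OF assms(1,2)])
  fix b
  show "part_entry xs b = part_entry ys b"
  proof (cases b)
    case (Suc k)
    then show ?thesis
      using assms(3)[of b] assms(3)[of k] by (simp add: sum_list_take_eq_sum_part_entry)
  qed simp
qed

lemma part_entry_filter_pos:
  "sorted (rev w) \<Longrightarrow> part_entry (filter (\<lambda>x. 0 < x) w) b = part_entry w b"
proof (induction w rule: rev_induct)
  case (snoc x w)
  have sorted: "sorted (rev w)" and below: "\<forall>y\<in>set w. x \<le> y" using snoc.prems by auto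
  show ?case
  proof (cases "0 < x")
    case True
    moreover have "\<forall>y\<in>set w. 0 < y" using True below by fastforce
    ultimately have "filter (\<lambda>x. 0 < x) (w @ [x]) = w @ [x]" by simp
    then show ?thesis by simp
  next
    case False
    then have "part_entry (w @ [x]) b = part_entry w b"
      by (auto simp: part_entry_def nth_append)
    then show ?thesis using False snoc.IH[OF sorted] by simp
  qed
qed simp

lemma is_partition_filter_pos: "sorted (rev w) \<Longrightarrow> is_partition (filter (\<lambda>x. 0 < x) w)"
  unfolding is_partition_def by (auto simp: rev_filter intro: sorted_wrt_filter)

section \<open>Row positions on the Maya diagram\<close>

text \<open>Row \<open>b\<close> of a partition occupies position \<open>b - \<lambda>\<^sub>b - 1\<close> of its Maya diagram: the content of
  the first node to the right of the row.\<close>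

definition row_edge :: "nat list \<Rightarrow> nat \<Rightarrow> int" where
  "row_edge xs b = int b - int (part_entry xs b) - 1"

definition ones :: "(int \<Rightarrow> int) \<Rightarrow> int set" where
  "ones m = {j. m j = 1}"

definition rows_before :: "nat list \<Rightarrow> int \<Rightarrow> nat set" where
  "rows_before xs j = {b. 1 \<le> b \<and> row_edge xs b < j}"

lemma row_edge_beyond: "length xs < b \<Longrightarrow> row_edge xs b = int b - 1"
  by (simp add: row_edge_def part_entry_beyond)

lemma row_edge_strict_mono:
  "is_partition xs \<Longrightarrow> 1 \<le> b \<Longrightarrow> b < b' \<Longrightarrow> row_edge xs b < row_edge xs b'"
  using part_entry_antimono[of xs b b'] by (simp add: row_edge_def)

lemma inj_on_row_edge: "is_partition xs \<Longrightarrow> inj_on (row_edge xs) {1..}"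
  by (rule inj_onI) (metis atLeast_iff linorder_neqE_nat order_less_irrefl row_edge_strict_mono)

lemma finite_rows_before: "finite (rows_before xs j)"
proof (rule finite_subset)
  show "rows_before xs j \<subseteq> {..length xs + nat j}"
  proof
    fix b assume b: "b \<in> rows_before xs j"
    show "b \<in> {..length xs + nat j}"
    proof (rule ccontr)
      assume "b \<notin> {..length xs + nat j}"
      then have "length xs < b" "j \<le> int b - 1" by auto
      with b show False by (simp add: rows_before_def row_edge_beyond)
    qed
  qed
qed simp

text \<open>Row \<open>b\<close> contains a node of content \<open>j\<close> iff \<open>1 \<le> b - j \<le> \<lambda>\<^sub>b\<close>; these rows together with the
  rows \<open>b \<le> j\<close> make up \<open>rows_before xs j\<close>.\<close>

lemma ncont_eq_card_rows_before: "ncont xs j = int (card (rows_before xs j)) - int (nat j)"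
proof -
  define N where "N = {(a, b). (a, b) \<in> nodes xs \<and> int b - int a = j}"
  define B where "B = {b. 1 \<le> b \<and> 1 \<le> int b - j \<and> int b - j \<le> int (part_entry xs b)}"
  have "snd ` N = B"
  proof
    show "snd ` N \<subseteq> B" unfolding N_def B_def nodes_def by auto
    show "B \<subseteq> snd ` N"
    proof
      fix b assume "b \<in> B"
      then have "(nat (int b - j), b) \<in> N" unfolding N_def B_def nodes_def by auto
      then show "b \<in> snd ` N" by force
    qed
  qed
  moreover have "inj_on snd N" unfolding N_def inj_on_def by auto
  ultimately have "card N = card B" using card_image by fastforce
  have split: "rows_before xs j = B \<union> {1..nat j}" "B \<inter> {1..nat j} = {}"
    unfolding rows_before_def row_edge_def B_def by auto
  then have "card (rows_before xs j) = card B + nat j"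
    using finite_rows_before[of xs j] by (simp add: card_Un_disjoint)
  then show ?thesis using \<open>card N = card B\<close> by (simp add: ncont_def N_def)
qed

lemma card_rows_before_succ:
  assumes "is_partition xs"
  shows "card (rows_before xs (j + 1))
    = card (rows_before xs j) + (if j \<in> row_edge xs ` {1..} then 1 else 0)"
proof -
  define E where "E = {b. 1 \<le> b \<and> row_edge xs b = j}"
  have split: "rows_before xs (j + 1) = rows_before xs j \<union> E" "rows_before xs j \<inter> E = {}"
    unfolding rows_before_def E_def by auto
  have "card E = (if j \<in> row_edge xs ` {1..} then 1 else 0)"
  proof (cases "j \<in> row_edge xs ` {1..}")
    case True
    then obtain b where "1 \<le> b" "j = row_edge xs b" by auto
    then have "E = {b}"
      unfolding E_def using inj_on_row_edge[OF assms] by (auto dest: inj_onD)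
    then show ?thesis using True by simp
  next
    case False
    then have "E = {}" unfolding E_def by force
    then show ?thesis using False by simp
  qed
  moreover have "finite E"
    using split(1) finite_rows_before[of xs "j + 1"] by (metis finite_Un)
  ultimately show ?thesis using split finite_rows_before[of xs j] by (simp add: card_Un_disjoint)
qed

lemma maya_partition:
  assumes "is_partition xs"
  shows "maya xs j = (if j \<in> row_edge xs ` {1..} then 1 else -1)"
proof -
  have "ncont xs (j + 1) - ncont xs j
      = (if j \<in> row_edge xs ` {1..} then 1 else 0) - (if 0 \<le> j then 1 else 0)"
    using card_rows_before_succ[OF assms, of j] by (simp add: ncont_eq_card_rows_before)
  then show ?thesis by (simp add: maya_def)
qed

lemma ones_maya: "is_partition xs \<Longrightarrow> ones (maya xs) = row_edge xs ` {1..}"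
  by (auto simp: ones_def maya_partition)

lemma maya_values: "maya xs j = 1 \<or> maya xs j = -1"
  by (simp add: maya_def)

section \<open>The excess of a partition\<close>

definition excess :: "nat list \<Rightarrow> int \<Rightarrow> int" where
  "excess xs s = (\<Sum>b = 1..length xs + nat s. max 0 (s - row_edge xs b))"

lemma excess_eq_sum_upto:
  assumes "length xs + nat s \<le> M"
  shows "excess xs s = (\<Sum>b = 1..M. max 0 (s - row_edge xs b))"
  unfolding excess_def
proof (rule sum.mono_neutral_left)
  show "\<forall>b\<in>{1..M} - {1..length xs + nat s}. max 0 (s - row_edge xs b) = 0"
    by (auto simp: row_edge_beyond)
qed (use assms in auto)

lemma sum_row_gap:
  "(\<Sum>b = 1..k. s - row_edge xs b) = int (sum_list (take k xs)) + (\<Sum>b = 1..k. s + 1 - int b)"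
  by (simp add: row_edge_def sum_list_take_eq_sum_part_entry sum.distrib[symmetric] algebra_simps)

lemma sum_row_gap_le_excess: "(\<Sum>b = 1..k. s - row_edge xs b) \<le> excess xs s"
proof -
  define M where "M = max k (length xs + nat s)"
  have "(\<Sum>b = 1..k. s - row_edge xs b) \<le> (\<Sum>b = 1..k. max 0 (s - row_edge xs b))"
    by (rule sum_mono) simp
  also have "\<dots> \<le> (\<Sum>b = 1..M. max 0 (s - row_edge xs b))"
    by (rule sum_mono2) (auto simp: M_def)
  also have "\<dots> = excess xs s"
    by (rule excess_eq_sum_upto[symmetric]) (simp add: M_def)
  finally show ?thesis .
qed

lemma sum_max_0_eq_initial_sum:
  fixes t :: "nat \<Rightarrow> int"
  assumes antitone: "\<And>b b'. 1 \<le> b \<Longrightarrow> b \<le> b' \<Longrightarrow> t b' \<le> t b"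
  shows "\<exists>k. (\<Sum>b = 1..M. max 0 (t b)) = (\<Sum>b = 1..k. t b)"
proof (induction M)
  case (Suc M)
  then obtain k where k: "(\<Sum>b = 1..M. max 0 (t b)) = (\<Sum>b = 1..k. t b)" by blast
  show ?case
  proof (cases "0 < t (Suc M)")
    case True
    then have "\<forall>b\<in>{1..Suc M}. max 0 (t b) = t b"
      using antitone[of _ "Suc M"] by force
    then have "(\<Sum>b = 1..Suc M. max 0 (t b)) = (\<Sum>b = 1..Suc M. t b)" by (intro sum.cong) auto
    then show ?thesis by blast
  next
    case False
    then show ?thesis using k by (auto simp: sum.cl_ivl_Suc)
  qed
qed (rule exI[of _ 0], simp)

lemma excess_eq_initial_sum:
  assumes "is_partition xs"
  shows "\<exists>k. excess xs s = (\<Sum>b = 1..k. s - row_edge xs b)"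
  unfolding excess_def
proof (rule sum_max_0_eq_initial_sum)
  fix b b' :: nat assume "1 \<le> b" "b \<le> b'"
  then show "s - row_edge xs b' \<le> s - row_edge xs b"
    using row_edge_strict_mono[OF assms, of b b'] by (cases "b = b'") auto
qed

lemma excess_eq_sum_row_gap:
  assumes "\<And>b. 1 \<le> b \<Longrightarrow> b \<le> k \<Longrightarrow> row_edge xs b \<le> s"
    and "\<And>b. k < b \<Longrightarrow> s \<le> row_edge xs b"
  shows "excess xs s = (\<Sum>b = 1..k. s - row_edge xs b)"
proof -
  define M where "M = max k (length xs + nat s)"
  have "excess xs s = (\<Sum>b = 1..M. max 0 (s - row_edge xs b))"
    by (rule excess_eq_sum_upto) (simp add: M_def)
  also have "\<dots> = (\<Sum>b = 1..k. max 0 (s - row_edge xs b))"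
  proof (rule sum.mono_neutral_right)
    show "\<forall>b\<in>{1..M} - {1..k}. max 0 (s - row_edge xs b) = 0"
      using assms(2) by force
  qed (auto simp: M_def)
  also have "\<dots> = (\<Sum>b = 1..k. s - row_edge xs b)"
    by (rule sum.cong) (use assms(1) in auto)
  finally show ?thesis .
qed

lemma excess_mono_if_partial_sums_le:
  assumes "is_partition ys" "\<And>k. sum_list (take k ys) \<le> sum_list (take k xs)"
  shows "excess ys s \<le> excess xs s"
proof -
  obtain k where "excess ys s = (\<Sum>b = 1..k. s - row_edge ys b)"
    using excess_eq_initial_sum[OF assms(1)] by blast
  also have "\<dots> \<le> (\<Sum>b = 1..k. s - row_edge xs b)"
    unfolding sum_row_gap using assms(2)[of k] by simp
  also have "\<dots> \<le> excess xs s" by (rule sum_row_gap_le_excess)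
  finally show ?thesis .
qed

lemma partial_sum_le_if_excess_le:
  assumes "is_partition xs" "\<And>s. excess ys s \<le> excess xs s"
  shows "sum_list (take k ys) \<le> sum_list (take k xs)"
proof (cases "k = 0")
  case False
  define s where "s = row_edge xs k"
  have "excess xs s = (\<Sum>b = 1..k. s - row_edge xs b)"
  proof (rule excess_eq_sum_row_gap)
    fix b assume "1 \<le> b" "b \<le> k"
    then show "row_edge xs b \<le> s"
      using row_edge_strict_mono[OF assms(1), of b k] by (cases "b = k") (auto simp: s_def)
  next
    fix b assume "k < b"
    then show "s \<le> row_edge xs b"
      using row_edge_strict_mono[OF assms(1), of k b] False by (simp add: s_def)
  qed
  moreover have "(\<Sum>b = 1..k. s - row_edge ys b) \<le> excess ys s" by (rule sum_row_gap_le_excess)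
  ultimately have "(\<Sum>b = 1..k. s - row_edge ys b) \<le> (\<Sum>b = 1..k. s - row_edge xs b)"
    using assms(2)[of s] by linarith
  then show ?thesis unfolding sum_row_gap by simp
qed simp

lemma excess_eq_size:
  assumes "int (length xs) \<le> s"
  shows "excess xs s = int (sum_list xs) + (\<Sum>b = 1..nat s. s + 1 - int b)"
proof -
  have "excess xs s = (\<Sum>b = 1..nat s. s - row_edge xs b)"
  proof (rule excess_eq_sum_row_gap)
    fix b assume "1 \<le> b" "b \<le> nat s"
    then show "row_edge xs b \<le> s" by (simp add: row_edge_def)
  next
    fix b assume "nat s < b"
    then show "s \<le> row_edge xs b" using assms by (simp add: row_edge_beyond)
  qed
  moreover have "take (nat s) xs = xs" using assms by simp
  ultimately show ?thesis unfolding sum_row_gap by simp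
qed

text \<open>Pointwise comparison of the excesses encodes the comparison of partial sums, eventual
  equality the equality of sizes.\<close>

lemma dominates_iff_excess:
  assumes "is_partition xs" "is_partition ys"
  shows "dominates xs ys \<longleftrightarrow>
    (\<forall>s. excess ys s \<le> excess xs s) \<and> (\<forall>\<^sub>F s in at_top. excess ys s = excess xs s)"
proof
  assume dom: "dominates xs ys"
  have "excess ys s \<le> excess xs s" for s
    using excess_mono_if_partial_sums_le[OF assms(2)] dom by (simp add: dominates_def)
  moreover have "\<forall>\<^sub>F s in at_top. excess ys s = excess xs s"
  proof (rule eventually_at_top_linorderI)
    fix s assume "int (length xs + length ys) \<le> s"
    then show "excess ys s = excess xs s" using dom by (simp add: excess_eq_size dominates_def)
  qed
  ultimately show "(\<forall>s. excess ys s \<le> excess xs s) \<and> (\<forall>\<^sub>F s in at_top. excess ys s = excess xs s)"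
    by blast
next
  assume "(\<forall>s. excess ys s \<le> excess xs s) \<and> (\<forall>\<^sub>F s in at_top. excess ys s = excess xs s)"
  then have le: "\<And>s. excess ys s \<le> excess xs s"
    and "\<exists>N. \<forall>s\<ge>N. excess ys s = excess xs s" by (auto simp: eventually_at_top_linorder)
  then obtain N where N: "\<And>s. N \<le> s \<Longrightarrow> excess ys s = excess xs s" by blast
  define s where "s = max N (int (length xs + length ys))"
  have "excess ys s = excess xs s" by (simp add: N s_def)
  then have "sum_list ys = sum_list xs"
    using excess_eq_size[of xs s] excess_eq_size[of ys s] by (simp add: s_def)
  then show "dominates xs ys"
    using partial_sum_le_if_excess_le[OF assms(1) le] by (simp add: dominates_def)
qed

definition gap_sum :: "int set \<Rightarrow> int \<Rightarrow> int" where
  "gap_sum H s = (\<Sum>h | h \<in> H \<and> h \<le> s. s - h)"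

lemma excess_eq_gap_sum:
  assumes "is_partition xs"
  shows "excess xs s = gap_sum (ones (maya xs)) s"
proof -
  define M where "M = length xs + nat s + 1"
  define A where "A = {b \<in> {1..M}. row_edge xs b \<le> s}"
  have "{h. h \<in> ones (maya xs) \<and> h \<le> s} = row_edge xs ` A"
  proof
    show "row_edge xs ` A \<subseteq> {h. h \<in> ones (maya xs) \<and> h \<le> s}"
      by (auto simp: A_def ones_maya[OF assms])
    show "{h. h \<in> ones (maya xs) \<and> h \<le> s} \<subseteq> row_edge xs ` A"
    proof
      fix h assume "h \<in> {h. h \<in> ones (maya xs) \<and> h \<le> s}"
      then obtain b where b: "1 \<le> b" "h = row_edge xs b" "h \<le> s"
        by (auto simp: ones_maya[OF assms])
      then have "b \<le> M" by (cases "length xs < b") (auto simp: M_def row_edge_beyond nat_le_iff)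
      then show "h \<in> row_edge xs ` A" using b by (auto simp: A_def)
    qed
  qed
  moreover have "inj_on (row_edge xs) A"
    using inj_on_row_edge[OF assms] by (rule inj_on_subset) (auto simp: A_def)
  ultimately have "gap_sum (ones (maya xs)) s = (\<Sum>b\<in>A. s - row_edge xs b)"
    by (simp add: gap_sum_def sum.reindex)
  also have "\<dots> = (\<Sum>b = 1..M. if row_edge xs b \<le> s then s - row_edge xs b else 0)"
    unfolding A_def by (rule sum.inter_filter) simp
  also have "\<dots> = excess xs s"
    by (subst excess_eq_sum_upto[of xs s M]) (auto simp: M_def intro!: sum.cong)
  finally show ?thesis ..
qed

lemma gap_sum_shift: "gap_sum {j. j + k \<in> H} s = gap_sum H (s + k)"
proof -
  have "{h. h \<in> H \<and> h \<le> s + k} = (\<lambda>j. j + k) ` {j. j + k \<in> H \<and> j \<le> s}"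
    by (auto simp: image_iff) (metis add_diff_cancel_right' diff_add_cancel diff_right_mono)
  then show ?thesis by (simp add: gap_sum_def sum.reindex inj_on_def)
qed

lemma partition_eq_if_maya_eq:
  assumes "is_partition xs" "is_partition ys" "maya xs = maya ys"
  shows "xs = ys"
proof (rule partition_eq_if_sum_list_take_eq[OF assms(1,2)])
  have "excess xs s = excess ys s" for s
    using assms by (simp add: excess_eq_gap_sum)
  then show "sum_list (take k xs) = sum_list (take k ys)" for k
    using partial_sum_le_if_excess_le[OF assms(1), of ys k]
      partial_sum_le_if_excess_le[OF assms(2), of xs k] by simp
qed

section \<open>Bounded Maya diagrams and charge\<close>

definition maya_bounded :: "(int \<Rightarrow> int) \<Rightarrow> int \<Rightarrow> bool" where
  "maya_bounded m N \<longleftrightarrow> 0 \<le> N \<and> (\<forall>j. m j = 1 \<or> m j = -1)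
     \<and> (\<forall>j. j < -N \<longrightarrow> m j = -1) \<and> (\<forall>j. N \<le> j \<longrightarrow> m j = 1)"

lemma maya_bounded_mono: "maya_bounded m N \<Longrightarrow> N \<le> N' \<Longrightarrow> maya_bounded m N'"
  unfolding maya_bounded_def by auto

lemma maya_bounded_shift: "maya_bounded m N \<Longrightarrow> maya_bounded (\<lambda>j. m (j + k)) (N + \<bar>k\<bar>)"
  unfolding maya_bounded_def by auto

lemma maya_bounded_subsample:
  assumes m: "maya_bounded m N" and "1 \<le> l"
  shows "maya_bounded (\<lambda>j. m (a + j * int l)) (N + \<bar>a\<bar>)"
  unfolding maya_bounded_def
proof (intro conjI allI impI)
  fix j :: int assume j: "j < -(N + \<bar>a\<bar>)"
  then have "j \<le> 0" using m unfolding maya_bounded_def by linarith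
  then have "j * int l \<le> j" using \<open>1 \<le> l\<close> mult_left_mono_neg[of 1 "int l" j] by simp
  with j have "a + j * int l < -N" by linarith
  then show "m (a + j * int l) = -1" using m by (simp add: maya_bounded_def)
next
  fix j :: int assume j: "N + \<bar>a\<bar> \<le> j"
  then have "0 \<le> j" using m unfolding maya_bounded_def by linarith
  then have "j \<le> j * int l" using \<open>1 \<le> l\<close> mult_left_mono[of 1 "int l" j] by simp
  with j have "N \<le> a + j * int l" by linarith
  then show "m (a + j * int l) = 1" using m by (simp add: maya_bounded_def)
qed (use m in \<open>simp_all add: maya_bounded_def\<close>)

lemma maya_bounded_partition:
  assumes "is_partition xs"
  shows "maya_bounded (maya xs) (int (sum_list xs + length xs))"
  unfolding maya_bounded_def
proof (intro conjI allI impI)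
  fix j :: int assume j: "j < - int (sum_list xs + length xs)"
  have "j \<noteq> row_edge xs b" if "1 \<le> b" for b
    using part_entry_le_sum_list[of xs b] j that by (simp add: row_edge_def)
  then show "maya xs j = -1" by (auto simp: maya_partition[OF assms])
next
  fix j :: int assume j: "int (sum_list xs + length xs) \<le> j"
  then have "row_edge xs (nat j + 1) = j" by (simp add: row_edge_beyond)
  then have "j \<in> row_edge xs ` {1..}" by (metis atLeast_iff image_eqI le_add2)
  then show "maya xs j = 1" by (simp add: maya_partition[OF assms])
qed (simp_all add: maya_values)

lemma finite_ones_le:
  assumes "maya_bounded m N"
  shows "finite {h. h \<in> ones m \<and> h \<le> s}"
proof (rule finite_subset)
  show "{h. h \<in> ones m \<and> h \<le> s} \<subseteq> {-N..s}"
  proof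
    fix h assume "h \<in> {h. h \<in> ones m \<and> h \<le> s}"
    moreover from this have "\<not> h < -N" using assms by (auto simp: maya_bounded_def ones_def)
    ultimately show "h \<in> {-N..s}" by simp
  qed
qed simp

lemma charge_shift_window:
  assumes m: "maya_bounded m N" and k: "-N \<le> k" "k \<le> N"
  shows "charge (\<lambda>j. m (j + k)) = k + int (card (ones m \<inter> {-N..<N})) - N"
proof -
  define A where "A = {j. j < 0 \<and> m (j + k) = 1}"
  define B where "B = {j. 0 \<le> j \<and> m (j + k) = -1}"
  have translate: "card ((\<lambda>j. j + k) ` X) = card X" for X
    by (rule card_image) (simp add: inj_on_def)
  have "(\<lambda>j. j + k) ` A = ones m \<inter> {-N..<k}"
  proof
    show "(\<lambda>j. j + k) ` A \<subseteq> ones m \<inter> {-N..<k}"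
    proof
      fix h assume "h \<in> (\<lambda>j. j + k) ` A"
      then obtain j where "h = j + k" "j < 0" "m h = 1" by (auto simp: A_def)
      moreover have "\<not> h < -N" using m \<open>m h = 1\<close> by (force simp: maya_bounded_def)
      ultimately show "h \<in> ones m \<inter> {-N..<k}" by (simp add: ones_def)
    qed
    show "ones m \<inter> {-N..<k} \<subseteq> (\<lambda>j. j + k) ` A"
    proof
      fix h assume "h \<in> ones m \<inter> {-N..<k}"
      then have "h - k \<in> A" by (simp add: A_def ones_def)
      then show "h \<in> (\<lambda>j. j + k) ` A" by force
    qed
  qed
  then have card_A: "card A = card (ones m \<inter> {-N..<k})" using translate[of A] by simp
  have "(\<lambda>j. j + k) ` B = {k..<N} - ones m"
  proof
    show "(\<lambda>j. j + k) ` B \<subseteq> {k..<N} - ones m"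
    proof
      fix h assume "h \<in> (\<lambda>j. j + k) ` B"
      then obtain j where "h = j + k" "0 \<le> j" "m h = -1" by (auto simp: B_def)
      moreover have "\<not> N \<le> h" using m \<open>m h = -1\<close> by (force simp: maya_bounded_def)
      ultimately show "h \<in> {k..<N} - ones m" by (simp add: ones_def)
    qed
    show "{k..<N} - ones m \<subseteq> (\<lambda>j. j + k) ` B"
    proof
      fix h assume "h \<in> {k..<N} - ones m"
      then have "h - k \<in> B" using m by (auto simp: B_def ones_def maya_bounded_def)
      then show "h \<in> (\<lambda>j. j + k) ` B" by force
    qed
  qed
  then have "card B = card ({k..<N} - ones m)" using translate[of B] by simp
  also have "\<dots> = nat (N - k) - card (ones m \<inter> {k..<N})"
    by (simp add: card_Diff_subset_Int Int_commute)
  finally have card_B: "int (card B) = N - k - int (card (ones m \<inter> {k..<N}))"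
    using card_mono[of "{k..<N}" "ones m \<inter> {k..<N}"] k by simp
  have "ones m \<inter> {-N..<N} = (ones m \<inter> {-N..<k}) \<union> (ones m \<inter> {k..<N})" using k by auto
  then have "card (ones m \<inter> {-N..<N}) = card (ones m \<inter> {-N..<k}) + card (ones m \<inter> {k..<N})"
    by (simp add: card_Un_disjoint[symmetric] disjoint_iff)
  then show ?thesis
    unfolding charge_def A_def[symmetric] B_def[symmetric] using card_A card_B by simp
qed

lemma charge_shift:
  assumes "maya_bounded m N"
  shows "charge (\<lambda>j. m (j + k)) = k + charge m"
proof -
  define N' where "N' = N + \<bar>k\<bar>"
  have m: "maya_bounded m N'" and "0 \<le> N"
    using assms maya_bounded_mono[OF assms] by (auto simp: N'_def maya_bounded_def)
  show ?thesis
    using charge_shift_window[OF m, of k] charge_shift_window[OF m, of 0] \<open>0 \<le> N\<close>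
    by (simp add: N'_def)
qed

lemma sorted_wrt_less_nth_gap:
  fixes L :: "int list"
  assumes "sorted_wrt (<) L" "i \<le> j" "j < length L"
  shows "L ! i + int (j - i) \<le> L ! j"
  using assms(2,3)
proof (induction j)
  case (Suc j)
  show ?case
  proof (cases "i = Suc j")
    case False
    then have "L ! i + int (j - i) \<le> L ! j" using Suc by simp
    moreover have "L ! j < L ! Suc j"
      using sorted_wrt_nth_less[OF assms(1), of j "Suc j"] Suc.prems by simp
    ultimately show ?thesis using False Suc.prems by (simp add: Suc_diff_le)
  qed simp
qed simp

text \<open>The partition has the parts \<open>i - L ! i\<close>, with the zero ones removed.\<close>

lemma partition_with_row_edges:
  fixes L :: "int list"
  assumes sorted: "sorted_wrt (<) L" and below: "\<And>i. i < length L \<Longrightarrow> L ! i \<le> int i"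
  obtains ys where "is_partition ys" "row_edge ys ` {1..} = set L \<union> {int (length L)..}"
proof -
  define n where "n = length L"
  define w where "w = map (\<lambda>i. nat (int i - L ! i)) [0..<n]"
  have "sorted (rev w)" unfolding sorted_rev_iff_nth_mono
  proof (intro allI impI)
    fix i j assume "i \<le> j" "j < length w"
    then show "w ! j \<le> w ! i"
      using sorted_wrt_less_nth_gap[OF sorted, of i j] by (simp add: w_def n_def)
  qed
  define ys where "ys = filter (\<lambda>x. 0 < x) w"
  have "is_partition ys" unfolding ys_def by (rule is_partition_filter_pos) fact
  have edge: "row_edge ys b = (if b \<le> n then L ! (b - 1) else int b - 1)" if "1 \<le> b" for b
    using that below[of "b - 1"] part_entry_filter_pos[OF \<open>sorted (rev w)\<close>, of b]
    by (simp add: row_edge_def ys_def part_entry_def w_def n_def)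
  have "row_edge ys ` {1..} = set L \<union> {int n..}"
  proof
    show "row_edge ys ` {1..} \<subseteq> set L \<union> {int n..}"
      using edge by (auto simp: n_def)
    show "set L \<union> {int n..} \<subseteq> row_edge ys ` {1..}"
    proof
      fix h assume "h \<in> set L \<union> {int n..}"
      then consider i where "i < n" "h = L ! i" | "int n \<le> h"
        by (auto simp: in_set_conv_nth n_def)
      then show "h \<in> row_edge ys ` {1..}"
      proof cases
        case 1
        then have "h = row_edge ys (Suc i)" using edge by simp
        then show ?thesis by (metis atLeast_iff image_eqI le_add1 plus_1_eq_Suc)
      next
        case 2
        then have "n \<le> nat h" by (metis le_nat_iff of_nat_0_le_iff order_trans)
        then have "h = row_edge ys (nat h + 1)" using edge 2 by simp
        then show ?thesis by (metis atLeast_iff image_eqI le_add2)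
      qed
    qed
  qed
  then show ?thesis using that \<open>is_partition ys\<close> by (simp add: n_def)
qed

lemma partition_of_maya:
  assumes m: "maya_bounded m N" and "charge m = 0"
  obtains ys where "is_partition ys" "maya ys = m"
proof -
  define S where "S = ones m \<inter> {-N..<N}"
  define L where "L = sorted_list_of_set S"
  have "0 \<le> N" using m by (simp add: maya_bounded_def)
  then have "int (card S) = N"
    using charge_shift_window[OF m, of 0] \<open>charge m = 0\<close> by (simp add: S_def)
  then have len: "int (length L) = N" by (simp add: L_def)
  have set_L: "set L = S" by (simp add: L_def S_def)
  have sorted: "sorted_wrt (<) L" by (simp add: L_def)
  have "L ! i \<le> int i" if "i < length L" for i
  proof -
    have "L ! i + int (length L - 1 - i) \<le> L ! (length L - 1)"
      using sorted_wrt_less_nth_gap[OF sorted, of i "length L - 1"] that by simp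
    moreover have "L ! (length L - 1) < N"
      using nth_mem[of "length L - 1" L] that by (simp add: set_L S_def)
    ultimately show ?thesis using that len by simp
  qed
  then obtain ys where ys: "is_partition ys" "row_edge ys ` {1..} = set L \<union> {N..}"
    using partition_with_row_edges[OF sorted] len by metis
  have "ones m = S \<union> {N..}"
    using m by (auto simp: S_def ones_def maya_bounded_def) (metis linorder_not_le one_neq_neg_one)
  then have "ones (maya ys) = ones m" using ys by (simp add: ones_maya set_L)
  then have "maya ys j = 1 \<longleftrightarrow> m j = 1" for j by (simp add: ones_def set_eq_iff)
  then have "maya ys j = m j" for j
    using maya_values[of ys j] m by (cases "m j = 1") (auto simp: maya_bounded_def)
  then have "maya ys = m" by blast
  then show ?thesis using that ys(1) by blast
qed

section \<open>The \<open>l\<close>-quotient\<close>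

lemma maya_bounded_maya_comp:
  assumes "is_partition xs" "1 \<le> l"
  shows "maya_bounded (maya_comp l xs i) (int (sum_list xs + length xs + i))"
  using maya_bounded_subsample[OF maya_bounded_partition[OF assms(1)] assms(2), of "int i"]
  by (simp add: maya_comp_def)

lemma quot_comp_spec:
  assumes "is_partition xs" "1 \<le> l"
  shows "is_partition (quot_comp l xs i)"
    and "maya (quot_comp l xs i) = (\<lambda>j. maya_comp l xs i (j - charge (maya_comp l xs i)))"
proof -
  define m where "m = maya_comp l xs i"
  define c where "c = charge m"
  have m_bounded: "maya_bounded m (int (sum_list xs + length xs + i))"
    unfolding m_def by (rule maya_bounded_maya_comp[OF assms])
  have charge_translate: "charge (\<lambda>j. m (j + k)) = 0 \<longleftrightarrow> k = -c" for k
    using charge_shift[OF m_bounded, of k] by (auto simp: c_def)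
  obtain ys where ys: "is_partition ys" "maya ys = (\<lambda>j. m (j + -c))"
    using partition_of_maya[OF maya_bounded_shift[OF m_bounded]] charge_translate by blast
  have "quot_comp l xs i = ys"
    unfolding quot_comp_def m_def[symmetric]
  proof (rule the_equality)
    show "is_partition ys \<and> (\<exists>k. charge (\<lambda>j. m (j + k)) = 0 \<and> maya ys = (\<lambda>j. m (j + k)))"
      using ys charge_translate by blast
  next
    fix zs assume "is_partition zs \<and> (\<exists>k. charge (\<lambda>j. m (j + k)) = 0 \<and> maya zs = (\<lambda>j. m (j + k)))"
    then show "zs = ys" using partition_eq_if_maya_eq[of zs ys] ys charge_translate by auto
  qed
  then show "is_partition (quot_comp l xs i)"
    and "maya (quot_comp l xs i) = (\<lambda>j. maya_comp l xs i (j - charge (maya_comp l xs i)))"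
    using ys by (simp_all add: m_def c_def)
qed

lemma quot_nth: "i < l \<Longrightarrow> quot l xs ! i = quot_comp l xs i"
  by (simp add: quot_def)

section \<open>Runners of the abacus\<close>

lemma le_div_iff_mult_le_int:
  fixes a q l :: int
  assumes "0 < l"
  shows "q \<le> a div l \<longleftrightarrow> q * l \<le> a"
  by (smt (verit) assms minus_mult_div_eq_mod mult.commute
      nonzero_mult_div_cancel_right pos_mod_sign zdiv_mono1)

lemma sum_by_residues:
  fixes f :: "int \<Rightarrow> 'a::comm_monoid_add"
  assumes "0 < l" "finite A"
  shows "sum f A = (\<Sum>i<l. \<Sum>j | int i + j * int l \<in> A. f (int i + j * int l))"
proof -
  define B where "B i = {j. int i + j * int l \<in> A}" for i
  have "finite (B i)" for i
  proof (rule finite_imageD)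
    show "finite ((\<lambda>j. int i + j * int l) ` B i)"
      using assms(2) by (rule finite_subset[rotated]) (auto simp: B_def)
    show "inj_on (\<lambda>j. int i + j * int l) (B i)" using assms(1) by (simp add: inj_on_def)
  qed
  then have "(\<Sum>i<l. \<Sum>j\<in>B i. f (int i + j * int l)) = (\<Sum>(i, j)\<in>Sigma {..<l} B. f (int i + j * int l))"
    by (simp add: sum.Sigma)
  also have "\<dots> = sum f A"
  proof (rule sum.reindex_bij_witness[where i = "\<lambda>h. (nat (h mod int l), h div int l)"
        and j = "\<lambda>(i, j). int i + j * int l"])
    fix p assume "p \<in> Sigma {..<l} B"
    then show "(nat ((case p of (i, j) \<Rightarrow> int i + j * int l) mod int l),
        (case p of (i, j) \<Rightarrow> int i + j * int l) div int l) = p"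
      by (auto simp: B_def)
  next
    fix h assume "h \<in> A"
    moreover have "int (nat (h mod int l)) = h mod int l" using assms(1) by simp
    ultimately show "(case (nat (h mod int l), h div int l) of (i, j) \<Rightarrow> int i + j * int l) = h"
      and "(nat (h mod int l), h div int l) \<in> Sigma {..<l} B"
      using assms(1) by (auto simp: B_def nat_less_iff)
  qed (auto simp: B_def)
  finally show ?thesis by (simp add: B_def)
qed

lemma gap_sum_runner_combination:
  fixes L q r :: int
  shows "(\<Sum>j | j \<in> H \<and> j \<le> q. q * L + r - j * L) = (L - r) * gap_sum H q + r * gap_sum H (q + 1)"
proof (cases "finite {j. j \<in> H \<and> j \<le> q}")
  case True
  have "gap_sum H (q + 1) = (\<Sum>j | j \<in> H \<and> j \<le> q. q + 1 - j)"
    unfolding gap_sum_def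
  proof (rule sum.mono_neutral_right)
    have "{j. j \<in> H \<and> j \<le> q + 1} \<subseteq> insert (q + 1) {j. j \<in> H \<and> j \<le> q}" by auto
    then show "finite {j. j \<in> H \<and> j \<le> q + 1}" using True by (simp add: finite_subset)
  qed auto
  then have "(L - r) * gap_sum H q + r * gap_sum H (q + 1)
      = (\<Sum>j | j \<in> H \<and> j \<le> q. (L - r) * (q - j) + r * (q + 1 - j))"
    by (simp add: gap_sum_def sum_distrib_left sum.distrib)
  also have "\<dots> = (\<Sum>j | j \<in> H \<and> j \<le> q. q * L + r - j * L)"
    by (rule sum.cong) (simp_all add: algebra_simps)
  finally show ?thesis ..
next
  case False
  moreover have "infinite {j. j \<in> H \<and> j \<le> q + 1}"
    using False by (rule contrapos_nn) (auto elim: finite_subset[rotated])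
  ultimately show ?thesis by (simp add: gap_sum_def)
qed

text \<open>Seen from runner \<open>i\<close> of the \<open>l\<close>-abacus, position \<open>s\<close> lies between the runner positions \<open>q\<close>
  and \<open>q + 1\<close>, where \<open>s - i = q l + r\<close>; the runner sum interpolates with weights \<open>l - r\<close> and \<open>r\<close>.\<close>

definition runner_sum :: "nat \<Rightarrow> (nat \<Rightarrow> int \<Rightarrow> int) \<Rightarrow> int \<Rightarrow> int" where
  "runner_sum l F s = (\<Sum>i<l. (int l - (s - int i) mod int l) * F i ((s - int i) div int l)
      + (s - int i) mod int l * F i ((s - int i) div int l + 1))"

lemma gap_sum_eq_runner_sum:
  assumes "1 \<le> l" "finite {h. h \<in> H \<and> h \<le> s}"
  shows "gap_sum H s = runner_sum l (\<lambda>i. gap_sum {j. int i + j * int l \<in> H}) s"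
proof -
  have "gap_sum H s = (\<Sum>i<l. \<Sum>j | int i + j * int l \<in> {h. h \<in> H \<and> h \<le> s}. s - (int i + j * int l))"
    unfolding gap_sum_def using assms by (intro sum_by_residues) auto
  also have "\<dots> = runner_sum l (\<lambda>i. gap_sum {j. int i + j * int l \<in> H}) s"
    unfolding runner_sum_def
  proof (rule sum.cong[OF refl])
    fix i
    define q where "q = (s - int i) div int l"
    define r where "r = (s - int i) mod int l"
    have "int i + j * int l \<le> s \<longleftrightarrow> j \<le> q" for j
      using le_div_iff_mult_le_int[of "int l" j "s - int i"] assms(1) by (auto simp: q_def)
    then have "(\<Sum>j | int i + j * int l \<in> {h. h \<in> H \<and> h \<le> s}. s - (int i + j * int l))
        = (\<Sum>j | j \<in> {j. int i + j * int l \<in> H} \<and> j \<le> q. q * int l + r - j * int l)"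
      by (intro sum.cong) (auto simp: q_def r_def algebra_simps)
    also have "\<dots> = (int l - r) * gap_sum {j. int i + j * int l \<in> H} q
        + r * gap_sum {j. int i + j * int l \<in> H} (q + 1)"
      by (rule gap_sum_runner_combination)
    finally show "(\<Sum>j | int i + j * int l \<in> {h. h \<in> H \<and> h \<le> s}. s - (int i + j * int l))
        = (int l - r) * gap_sum {j. int i + j * int l \<in> H} q
          + r * gap_sum {j. int i + j * int l \<in> H} (q + 1)" .
  qed
  finally show ?thesis .
qed

lemma runner_sum_mono:
  assumes "\<And>i q. i < l \<Longrightarrow> F i q \<le> G i q"
  shows "runner_sum l F s \<le> runner_sum l G s"
  unfolding runner_sum_def
proof (rule sum_mono)
  fix i assume "i \<in> {..<l}"
  moreover from this have "0 \<le> (s - int i) mod int l" "(s - int i) mod int l \<le> int l"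
    by (simp_all add: order_less_imp_le)
  ultimately show "(int l - (s - int i) mod int l) * F i ((s - int i) div int l)
      + (s - int i) mod int l * F i ((s - int i) div int l + 1)
    \<le> (int l - (s - int i) mod int l) * G i ((s - int i) div int l)
      + (s - int i) mod int l * G i ((s - int i) div int l + 1)"
    using assms by (intro add_mono mult_left_mono) auto
qed

lemma runner_sum_eventually_eq:
  assumes "\<And>i. i < l \<Longrightarrow> \<forall>\<^sub>F q in at_top. F i q = G i q"
  shows "\<forall>\<^sub>F s in at_top. runner_sum l F s = runner_sum l G s"
proof -
  have "\<forall>\<^sub>F q in at_top. \<forall>i\<in>{..<l}. F i q = G i q"
    using assms by (intro eventually_ball_finite) auto
  then obtain Q where Q: "\<And>i q. i < l \<Longrightarrow> Q \<le> q \<Longrightarrow> F i q = G i q"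
    by (auto simp: eventually_at_top_linorder)
  show ?thesis
  proof (rule eventually_at_top_linorderI)
    fix s assume "Q * int l + int l \<le> s"
    then have "Q \<le> (s - int i) div int l" if "i < l" for i
      using that le_div_iff_mult_le_int[of "int l" Q "s - int i"] by simp
    then have agree: "F i ((s - int i) div int l + k) = G i ((s - int i) div int l + k)"
      if "i < l" "0 \<le> k" for i k
      using Q[of i "(s - int i) div int l + k"] that by force
    then show "runner_sum l F s = runner_sum l G s"
      unfolding runner_sum_def using agree[of _ 0] agree[of _ 1] by (intro sum.cong) simp_all
  qed
qed

lemma gap_sum_runner_eq_excess_quot_comp:
  assumes "is_partition xs" "1 \<le> l"
  shows "gap_sum {j. int i + j * int l \<in> ones (maya xs)} q
    = excess (quot_comp l xs i) (q + charge (maya_comp l xs i))"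
proof -
  define m where "m = maya_comp l xs i"
  define c where "c = charge m"
  have "{j. int i + j * int l \<in> ones (maya xs)} = ones m"
    by (simp add: ones_def m_def maya_comp_def)
  moreover have "ones (maya (quot_comp l xs i)) = {j. j + - c \<in> ones m}"
    using quot_comp_spec(2)[OF assms] by (simp add: ones_def m_def c_def)
  ultimately show ?thesis
    using excess_eq_gap_sum[OF quot_comp_spec(1)[OF assms]] gap_sum_shift[of "- c" "ones m" "q + c"]
    by (simp add: c_def m_def)
qed

lemma excess_eq_runner_sum:
  assumes "is_partition xs" "1 \<le> l"
  shows "excess xs s = runner_sum l (\<lambda>i q. excess (quot l xs ! i) (q + charge (maya_comp l xs i))) s"
proof -
  have "excess xs s = runner_sum l (\<lambda>i. gap_sum {j. int i + j * int l \<in> ones (maya xs)}) s"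
    using excess_eq_gap_sum[OF assms(1)] gap_sum_eq_runner_sum[OF assms(2)]
      finite_ones_le[OF maya_bounded_partition[OF assms(1)]] by simp
  also have "\<dots> = runner_sum l (\<lambda>i q. excess (quot l xs ! i) (q + charge (maya_comp l xs i))) s"
    unfolding runner_sum_def
    by (intro sum.cong) (simp_all add: gap_sum_runner_eq_excess_quot_comp[OF assms] quot_nth)
  finally show ?thesis .
qed

lemma eventually_at_top_add_const:
  fixes c :: "'a::linordered_ab_group_add"
  assumes "\<forall>\<^sub>F x in at_top. P x"
  shows "\<forall>\<^sub>F x in at_top. P (x + c)"
proof -
  obtain N where "\<And>x. N \<le> x \<Longrightarrow> P x" using assms by (auto simp: eventually_at_top_linorder)
  then have "N - c \<le> x \<Longrightarrow> P (x + c)" for x by (simp add: diff_le_eq)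
  then show ?thesis by (rule eventually_at_top_linorderI)
qed

theorem mainTheorem5:
  fixes l :: nat and lam mu :: "nat list"
  assumes "1 \<le> l"
    and "is_partition lam" and "is_partition mu"
    and "core l lam = core l mu"
    and "\<forall>i<l. sum_list (quot l lam ! i) = sum_list (quot l mu ! i)
                \<and> dominates (quot l lam ! i) (quot l mu ! i)"
  shows "dominates lam mu"
proof -
  define F where "F xs i q = excess (quot l xs ! i) (q + charge (maya_comp l xs i))" for xs i q
  have runners: "excess xs s = runner_sum l (F xs) s" if "is_partition xs" for xs s
    unfolding F_def by (rule excess_eq_runner_sum[OF that assms(1)])
  have "(\<forall>q. F mu i q \<le> F lam i q) \<and> (\<forall>\<^sub>F q in at_top. F mu i q = F lam i q)" if "i < l" for i
  proof -
    have "charge (maya_comp l mu i) = charge (maya_comp l lam i)"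
      using arg_cong[OF assms(4), of "\<lambda>cs. cs ! i"] that by (simp add: core_def)
    moreover have "is_partition (quot l xs ! i)" if "is_partition xs" for xs
      using quot_comp_spec(1)[OF that assms(1)] \<open>i < l\<close> by (simp add: quot_nth)
    then have "(\<forall>s. excess (quot l mu ! i) s \<le> excess (quot l lam ! i) s)
        \<and> (\<forall>\<^sub>F s in at_top. excess (quot l mu ! i) s = excess (quot l lam ! i) s)"
      using dominates_iff_excess assms(2,3,5) that by blast
    ultimately show ?thesis
      unfolding F_def using eventually_at_top_add_const[where P =
          "\<lambda>s. excess (quot l mu ! i) s = excess (quot l lam ! i) s"] by simp
  qed
  then have "(\<forall>s. excess mu s \<le> excess lam s) \<and> (\<forall>\<^sub>F s in at_top. excess mu s = excess lam s)"
    unfolding runners[OF assms(2)] runners[OF assms(3)]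
    by (simp add: runner_sum_mono runner_sum_eventually_eq)
  then show ?thesis using dominates_iff_excess[OF assms(2,3)] by blast
qed

end
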